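(* Fix nonnegative integers $p,q,p',q'$, set $k=p+q$, $n=p+q+p'+q'$, and $H=O(p,q)\times O(p',q')$. For $r,s\ge0$ let $\mathbb T^{r,s}=(\mathbb R^{k*})^{\otimes r}\otimes(\mathbb R^{n-k\,*})^{\otimes s}$ with its natural $H$-action. Let $\mathbf T=\mathbb T^{r_1,s_1}\oplus\cdots\oplus\mathbb T^{r_L,s_L}$ for some nonnegative integers $r_i,s_i$, and let $\mathcal E\subset\mathbf T$ be a nonempty $H$-invariant subset. If $P$ is a polynomial on $\mathbf T$ whose restriction to $\mathcal E$ is $H$-invariant, then there is a polynomial $P'$ on $\mathbf T$ which is $H$-invariant on all of $\mathbf T$ and satisfies $P'=P$ on $\mathcal E$.
   Context: $O(p,q)$ acts on $\mathbb R^k$ preserving a quadratic form of signature $(p,q)$ and $O(p',q')$ acts on $\mathbb R^{n-k}$ preserving a form of signature $(p',q')$; $H$ acts on $\mathbb T^{r,s}$ by the induced action on duals and tensor products, and diagonally on $\mathbf T$. *)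

theory Defs
  imports Complex_Main
begin

definition eta :: "nat \<Rightarrow> nat \<Rightarrow> real" where
  "eta p i = (if i < p then 1 else -1)"

definition Ogrp :: "nat \<Rightarrow> nat \<Rightarrow> (nat \<Rightarrow> nat \<Rightarrow> real) set" where
  "Ogrp p q = {A. \<forall>i<p+q. \<forall>j<p+q.
      (\<Sum>l<p+q. A l i * eta p l * A l j) = (if i = j then eta p i else 0)}"

text \<open>Inverse of A in O(p,q): eta A^T eta.\<close>
definition Oinv :: "nat \<Rightarrow> (nat \<Rightarrow> nat \<Rightarrow> real) \<Rightarrow> nat \<Rightarrow> nat \<Rightarrow> real" where
  "Oinv p A = (\<lambda>i j. eta p i * A j i * eta p j)"

definition Hgrp :: "nat \<Rightarrow> nat \<Rightarrow> nat \<Rightarrow> nat \<Rightarrow> ((nat \<Rightarrow> nat \<Rightarrow> real) \<times> (nat \<Rightarrow> nat \<Rightarrow> real)) set" where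
  "Hgrp p q p' q' = Ogrp p q \<times> Ogrp p' q'"

definition tuples :: "nat \<Rightarrow> nat \<Rightarrow> nat list set" where
  "tuples d r = {I. length I = r \<and> set I \<subseteq> {..<d}}"

text \<open>Coordinates of T = T^{r_0,s_0} + ... + T^{r_(L-1),s_(L-1)}: a coordinate is
  (summand index i, multi-index into (R^k)^r_i, multi-index into (R^(n-k))^s_i).\<close>
definition Idx :: "nat \<Rightarrow> nat \<Rightarrow> nat \<Rightarrow> nat \<Rightarrow> nat \<Rightarrow> (nat \<Rightarrow> nat) \<Rightarrow> (nat \<Rightarrow> nat)
    \<Rightarrow> (nat \<times> nat list \<times> nat list) set" where
  "Idx p q p' q' L r s = {(i, I, J). i < L \<and> I \<in> tuples (p+q) (r i) \<and> J \<in> tuples (p'+q') (s i)}"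

definition Tsp :: "nat \<Rightarrow> nat \<Rightarrow> nat \<Rightarrow> nat \<Rightarrow> nat \<Rightarrow> (nat \<Rightarrow> nat) \<Rightarrow> (nat \<Rightarrow> nat)
    \<Rightarrow> (nat \<times> nat list \<times> nat list \<Rightarrow> real) set" where
  "Tsp p q p' q' L r s = {x. \<forall>z. z \<notin> Idx p q p' q' L r s \<longrightarrow> x z = 0}"

text \<open>Natural action of h = (A,B) on dual tensors: (h.t)(v_1,..,w_s) = t(A^-1 v_1,..,B^-1 w_s),
  i.e. in coordinates each covector index is contracted with A^-1 (resp. B^-1).\<close>
definition act :: "nat \<Rightarrow> nat \<Rightarrow> nat \<Rightarrow> nat \<Rightarrow> nat \<Rightarrow> (nat \<Rightarrow> nat) \<Rightarrow> (nat \<Rightarrow> nat)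
    \<Rightarrow> (nat \<Rightarrow> nat \<Rightarrow> real) \<times> (nat \<Rightarrow> nat \<Rightarrow> real)
    \<Rightarrow> (nat \<times> nat list \<times> nat list \<Rightarrow> real) \<Rightarrow> (nat \<times> nat list \<times> nat list \<Rightarrow> real)" where
  "act p q p' q' L r s h x = (\<lambda>(i, I, J).
     if (i, I, J) \<in> Idx p q p' q' L r s then
       (\<Sum>I'\<in>tuples (p+q) (r i). \<Sum>J'\<in>tuples (p'+q') (s i).
          x (i, I', J') * (\<Prod>a<r i. Oinv p (fst h) (I' ! a) (I ! a))
                        * (\<Prod>b<s i. Oinv p' (snd h) (J' ! b) (J ! b)))
     else 0)"

inductive_set poly_on :: "'z set \<Rightarrow> (('z \<Rightarrow> real) \<Rightarrow> real) set" for Z :: "'z set" where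
  const: "(\<lambda>x. c) \<in> poly_on Z"
| coord: "z \<in> Z \<Longrightarrow> (\<lambda>x. x z) \<in> poly_on Z"
| add: "P \<in> poly_on Z \<Longrightarrow> Q \<in> poly_on Z \<Longrightarrow> (\<lambda>x. P x + Q x) \<in> poly_on Z"
| mult: "P \<in> poly_on Z \<Longrightarrow> Q \<in> poly_on Z \<Longrightarrow> (\<lambda>x. P x * Q x) \<in> poly_on Z"

end

(* A polynomial of degree at most d is a linear combination of monomials of degree at most d,
   and H acts on the finite-dimensional space of coefficient vectors through the tensor powers
   of its matrices. The coefficient vectors whose polynomial vanishes on E form an H-invariant
   subspace I. Since H is closed under transposition, the transpose of the action of h is the
   action of another element of H, so the orthogonal complement of I is H-invariant as well.
   Let P' have the coefficients of P projected onto this complement. Then P' = P on E, and for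
   every h the coefficients of h.P' - P' lie both in I (because P is invariant on E) and in its
   complement, hence vanish. *)

theory Submission
  imports Defs "HOL-Library.Function_Algebras" "HOL-Library.Indicator_Function"
    "Jordan_Normal_Form.Determinant"
begin

section \<open>Orthogonal projection for real functions on a finite set\<close>

global_interpretation real_fun: vector_space "\<lambda>(a::real) (f::'w \<Rightarrow> real) w. a * f w"
  by unfold_locales (auto simp: algebra_simps)

definition inner_on :: "'w set \<Rightarrow> ('w \<Rightarrow> real) \<Rightarrow> ('w \<Rightarrow> real) \<Rightarrow> real" where
  "inner_on S f g = (\<Sum>w\<in>S. f w * g w)"

lemma inner_on_diff_left: "inner_on S (f - g) h = inner_on S f h - inner_on S g h"
  by (simp add: inner_on_def algebra_simps sum_subtractf)

lemma inner_on_add_right: "inner_on S f (g + h) = inner_on S f g + inner_on S f h"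
  by (simp add: inner_on_def algebra_simps sum.distrib)

lemma inner_on_scale_left: "inner_on S (\<lambda>w. a * f w) g = a * inner_on S f g"
  by (simp add: inner_on_def algebra_simps sum_distrib_left)

lemma inner_on_scale_right: "inner_on S f (\<lambda>w. a * g w) = a * inner_on S f g"
  by (simp add: inner_on_def algebra_simps sum_distrib_left)

lemma inner_on_self_eq_0:
  assumes "finite S" "inner_on S f f = 0" "w \<in> S"
  shows "f w = 0"
proof -
  have "\<forall>w\<in>S. f w * f w = 0"
    using assms(1,2) unfolding inner_on_def by (subst (asm) sum_nonneg_eq_0_iff) auto
  then show ?thesis using assms(3) by simp
qed

lemma inner_on_span_eq_0:
  assumes "\<forall>b\<in>B. inner_on S f b = 0" "g \<in> real_fun.span B"
  shows "inner_on S f g = 0"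
proof -
  have "real_fun.subspace {g. inner_on S f g = 0}"
    unfolding real_fun.subspace_def
    by (auto simp: inner_on_add_right inner_on_scale_right) (simp add: inner_on_def)
  then show ?thesis using real_fun.span_induct[OF assms(2)] assms(1) by blast
qed

text \<open>Gram--Schmidt: the new vector \<open>v\<close> is replaced by its component \<open>u\<close> orthogonal to \<open>F\<close>.\<close>
lemma orthogonal_projection_span_exists:
  assumes "finite B" "finite S"
  shows "\<exists>c0 \<in> real_fun.span B. \<forall>b\<in>B. inner_on S (c - c0) b = 0"
  using assms(1)
proof (induction B arbitrary: c rule: finite_induct)
  case empty
  show ?case by (auto intro: real_fun.span_zero)
next
  case (insert v F)
  obtain c0 where c0: "c0 \<in> real_fun.span F" "\<forall>b\<in>F. inner_on S (c - c0) b = 0"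
    using insert.IH by blast
  obtain v0 where v0: "v0 \<in> real_fun.span F" "\<forall>b\<in>F. inner_on S (v - v0) b = 0"
    using insert.IH by blast
  define u where "u = v - v0"
  have span_F: "real_fun.span F \<subseteq> real_fun.span (insert v F)"
    by (rule real_fun.span_mono) auto
  have u_span: "u \<in> real_fun.span (insert v F)"
    unfolding u_def using span_F v0(1) real_fun.span_base[of v "insert v F"]
    by (intro real_fun.span_diff) auto
  define t where "t = inner_on S (c - c0) u / inner_on S u u"
  define c1 where "c1 = c0 + (\<lambda>w. t * u w)"
  have c1_span: "c1 \<in> real_fun.span (insert v F)"
    unfolding c1_def using span_F c0(1) u_span by (intro real_fun.span_add real_fun.span_scale) auto
  have c_c1: "c - c1 = (c - c0) - (\<lambda>w. t * u w)"
    unfolding c1_def by (rule diff_diff_eq[symmetric])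
  have u_orth: "\<forall>b\<in>F. inner_on S u b = 0"
    using v0(2) by (simp add: u_def)
  have expand: "inner_on S (c - c1) b = inner_on S (c - c0) b - t * inner_on S u b" for b
    unfolding c_c1 inner_on_diff_left inner_on_scale_left ..
  have orth_F: "\<forall>b\<in>F. inner_on S (c - c1) b = 0"
    using expand c0(2) u_orth by simp
  have orth_u: "inner_on S (c - c1) u = 0"
  proof (cases "inner_on S u u = 0")
    case True
    then have "\<forall>w\<in>S. u w = 0" using inner_on_self_eq_0[OF assms(2)] by blast
    then have "inner_on S (c - c0) u = 0" by (simp add: inner_on_def)
    then show ?thesis using expand[of u] True by simp
  next
    case False
    then show ?thesis using expand[of u] by (simp add: t_def)
  qed
  have "v = u + v0" unfolding u_def by simp
  then have "inner_on S (c - c1) v = 0"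
    using orth_u inner_on_span_eq_0[OF orth_F v0(1)] by (simp add: inner_on_add_right)
  with orth_F c1_span show ?case by blast
qed

lemma supported_in_span_indicators:
  assumes "finite S" "\<And>w. w \<notin> S \<Longrightarrow> f w = 0"
  shows "f \<in> real_fun.span ((\<lambda>w. indicator {w}) ` S)"
  using assms
proof (induction S arbitrary: f rule: finite_induct)
  case empty
  then have "f = 0" by (simp add: fun_eq_iff)
  then show ?case using real_fun.span_zero by metis
next
  case (insert s S)
  let ?span = "real_fun.span ((\<lambda>w. indicator {w}) ` insert s S)"
  have "f(s := 0) \<in> real_fun.span ((\<lambda>w. indicator {w}) ` S)"
    by (rule insert.IH) (use insert.prems in auto)
  moreover have "real_fun.span ((\<lambda>w. indicator {w}) ` S) \<subseteq> ?span"
    by (rule real_fun.span_mono) auto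
  ultimately have "f(s := 0) \<in> ?span" by blast
  moreover have "(\<lambda>w. f s * indicator {s} w) \<in> ?span"
    by (intro real_fun.span_scale real_fun.span_base) auto
  ultimately have "f(s := 0) + (\<lambda>w. f s * indicator {s} w) \<in> ?span"
    by (rule real_fun.span_add)
  moreover have "f(s := 0) + (\<lambda>w. f s * indicator {s} w) = f"
    by (auto simp: fun_eq_iff indicator_def)
  ultimately show ?case by simp
qed

lemma orthogonal_complement_decomposition:
  assumes "finite S" "real_fun.subspace I" "\<And>f w. f \<in> I \<Longrightarrow> w \<notin> S \<Longrightarrow> f w = 0"
  obtains c0 where "c0 \<in> I" "\<And>f. f \<in> I \<Longrightarrow> inner_on S (c - c0) f = 0"
proof -
  obtain B where B: "B \<subseteq> I" "real_fun.independent B" "I \<subseteq> real_fun.span B"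
    using real_fun.maximal_independent_subset[of I] by blast
  have "I \<subseteq> real_fun.span ((\<lambda>w. indicator {w}) ` S)"
    using supported_in_span_indicators assms(1,3) by blast
  then have "finite B"
    using real_fun.independent_span_bound[of "(\<lambda>w. indicator {w}) ` S" B] B(1,2) assms(1) by auto
  then obtain c0 where c0: "c0 \<in> real_fun.span B" "\<forall>b\<in>B. inner_on S (c - c0) b = 0"
    using orthogonal_projection_span_exists assms(1) by blast
  show ?thesis
  proof
    show "c0 \<in> I" using c0(1) real_fun.span_minimal[OF B(1) assms(2)] by blast
    show "inner_on S (c - c0) f = 0" if "f \<in> I" for f
      using inner_on_span_eq_0[OF c0(2)] B(3) that by blast
  qed
qed

section \<open>Families of matrices closed under transposition\<close>

definition vecmat_on :: "'w set \<Rightarrow> ('w \<Rightarrow> 'w \<Rightarrow> real) \<Rightarrow> ('w \<Rightarrow> real) \<Rightarrow> 'w \<Rightarrow> real" where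
  "vecmat_on S K f = (\<lambda>w'. if w' \<in> S then \<Sum>w\<in>S. f w * K w w' else 0)"

lemma vecmat_on_diff: "vecmat_on S K (f - g) = vecmat_on S K f - vecmat_on S K g"
  by (simp add: vecmat_on_def fun_eq_iff algebra_simps sum_subtractf)

lemma inner_on_vecmat_on_transpose:
  assumes "\<And>w w'. w \<in> S \<Longrightarrow> w' \<in> S \<Longrightarrow> K' w w' = K w' w"
  shows "inner_on S (vecmat_on S K f) g = inner_on S f (vecmat_on S K' g)"
proof -
  have "inner_on S (vecmat_on S K f) g = (\<Sum>w'\<in>S. \<Sum>w\<in>S. f w * K w w' * g w')"
    by (simp add: inner_on_def vecmat_on_def sum_distrib_right)
  also have "\<dots> = (\<Sum>w\<in>S. \<Sum>w'\<in>S. f w * K w w' * g w')"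
    by (rule sum.swap)
  also have "\<dots> = inner_on S f (vecmat_on S K' g)"
    by (auto simp: inner_on_def vecmat_on_def assms sum_distrib_left mult_ac intro!: sum.cong)
  finally show ?thesis .
qed

text \<open>The witness is the component of \<open>c\<close> orthogonal to \<open>I\<close>; that orthogonal complement is
  invariant because the family is closed under transposition.\<close>
lemma fixed_modulo_invariant_subspace:
  fixes K :: "'h \<Rightarrow> 'w \<Rightarrow> 'w \<Rightarrow> real"
  assumes "finite S" "real_fun.subspace I"
    and supp_I: "\<And>f w. f \<in> I \<Longrightarrow> w \<notin> S \<Longrightarrow> f w = 0"
    and invariant: "\<And>h f. h \<in> G \<Longrightarrow> f \<in> I \<Longrightarrow> vecmat_on S (K h) f \<in> I"
    and transpose_closed: "\<And>h. h \<in> G \<Longrightarrow> \<exists>h'\<in>G. \<forall>w\<in>S. \<forall>w'\<in>S. K h' w w' = K h w' w"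
  obtains c' where "c - c' \<in> I"
    "\<And>h. h \<in> G \<Longrightarrow> vecmat_on S (K h) c - c \<in> I \<Longrightarrow> vecmat_on S (K h) c' = c'"
proof -
  obtain c0 where c0: "c0 \<in> I" "\<And>f. f \<in> I \<Longrightarrow> inner_on S (c - c0) f = 0"
    using orthogonal_complement_decomposition[of S I c] assms(1-3) by blast
  define c' where "c' = c - c0"
  have "vecmat_on S (K h) c' = c'" if h: "h \<in> G" and c_fixed: "vecmat_on S (K h) c - c \<in> I" for h
  proof -
    obtain h' where h': "h' \<in> G" "\<forall>w\<in>S. \<forall>w'\<in>S. K h' w w' = K h w' w"
      using transpose_closed h by blast
    define \<delta> where "\<delta> = vecmat_on S (K h) c' - c'"
    have "\<delta> = (vecmat_on S (K h) c - c) - (vecmat_on S (K h) c0 - c0)"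
      by (simp add: \<delta>_def c'_def vecmat_on_diff)
    then have \<delta>_I: "\<delta> \<in> I"
      using c_fixed c0(1) invariant[OF h c0(1)] assms(2) by (simp add: real_fun.subspace_diff)
    have "inner_on S \<delta> f = 0" if f: "f \<in> I" for f
    proof -
      have "inner_on S (vecmat_on S (K h) c') f = inner_on S c' (vecmat_on S (K h') f)"
        using h'(2) by (intro inner_on_vecmat_on_transpose) auto
      also have "\<dots> = 0"
        using c0(2) invariant[OF h'(1) f] by (simp add: c'_def)
      finally show ?thesis
        using c0(2)[OF f] by (simp add: \<delta>_def inner_on_diff_left c'_def)
    qed
    then have "\<forall>w\<in>S. \<delta> w = 0"
      using inner_on_self_eq_0[OF assms(1)] \<delta>_I by blast
    with supp_I[OF \<delta>_I] have "\<delta> = 0" by (auto simp: fun_eq_iff)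
    then show ?thesis by (simp add: \<delta>_def)
  qed
  moreover have "c - c' \<in> I" using c0(1) by (simp add: c'_def)
  ultimately show ?thesis using that by blast
qed

definition lin_comb :: "'w set \<Rightarrow> ('w \<Rightarrow> 'x \<Rightarrow> real) \<Rightarrow> ('w \<Rightarrow> real) \<Rightarrow> 'x \<Rightarrow> real" where
  "lin_comb S b c x = (\<Sum>w\<in>S. c w * b w x)"

lemma lin_comb_diff: "lin_comb S b (c - c') x = lin_comb S b c x - lin_comb S b c' x"
  by (simp add: lin_comb_def algebra_simps sum_subtractf)

lemma lin_comb_vecmat_on:
  assumes "\<And>w. w \<in> S \<Longrightarrow> b w y = (\<Sum>w'\<in>S. K w w' * b w' x)"
  shows "lin_comb S b c y = lin_comb S b (vecmat_on S K c) x"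
proof -
  have "lin_comb S b c y = (\<Sum>w\<in>S. \<Sum>w'\<in>S. c w * K w w' * b w' x)"
    by (simp add: lin_comb_def assms sum_distrib_left mult.assoc)
  also have "\<dots> = (\<Sum>w'\<in>S. \<Sum>w\<in>S. c w * K w w' * b w' x)"
    by (rule sum.swap)
  also have "\<dots> = lin_comb S b (vecmat_on S K c) x"
    by (simp add: lin_comb_def vecmat_on_def sum_distrib_right)
  finally show ?thesis .
qed

lemma invariant_extension:
  fixes b :: "'w \<Rightarrow> 'x \<Rightarrow> real" and K :: "'h \<Rightarrow> 'w \<Rightarrow> 'w \<Rightarrow> real" and act :: "'h \<Rightarrow> 'x \<Rightarrow> 'x"
  assumes "finite S"
    and b_act: "\<And>h w x. h \<in> G \<Longrightarrow> w \<in> S \<Longrightarrow> b w (act h x) = (\<Sum>w'\<in>S. K h w w' * b w' x)"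
    and transpose_closed: "\<And>h. h \<in> G \<Longrightarrow> \<exists>h'\<in>G. \<forall>w\<in>S. \<forall>w'\<in>S. K h' w w' = K h w' w"
    and E_closed: "\<And>h x. h \<in> G \<Longrightarrow> x \<in> E \<Longrightarrow> act h x \<in> E"
    and supp_c: "\<And>w. w \<notin> S \<Longrightarrow> c w = 0"
    and invariant_on_E: "\<And>h x. h \<in> G \<Longrightarrow> x \<in> E \<Longrightarrow> lin_comb S b c (act h x) = lin_comb S b c x"
  obtains c' where "\<And>h x. h \<in> G \<Longrightarrow> lin_comb S b c' (act h x) = lin_comb S b c' x"
    and "\<And>x. x \<in> E \<Longrightarrow> lin_comb S b c' x = lin_comb S b c x"
proof -
  have act_coeffs: "lin_comb S b f (act h x) = lin_comb S b (vecmat_on S (K h) f) x"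
    if "h \<in> G" for h f x
    using b_act[OF that] by (rule lin_comb_vecmat_on)
  define I where "I = {f. (\<forall>w. w \<notin> S \<longrightarrow> f w = 0) \<and> (\<forall>x\<in>E. lin_comb S b f x = 0)}"
  have I_subspace: "real_fun.subspace I"
    unfolding real_fun.subspace_def I_def lin_comb_def
    by (auto simp: algebra_simps sum.distrib sum_distrib_left[symmetric])
  have I_supp: "\<And>f w. f \<in> I \<Longrightarrow> w \<notin> S \<Longrightarrow> f w = 0"
    by (simp add: I_def)
  have I_invariant: "vecmat_on S (K h) f \<in> I" if h: "h \<in> G" and f: "f \<in> I" for h f
  proof -
    have "lin_comb S b (vecmat_on S (K h) f) x = 0" if "x \<in> E" for x
      using act_coeffs[OF h, of f x] f E_closed[OF h that] by (simp add: I_def)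
    then show ?thesis by (simp add: I_def vecmat_on_def)
  qed
  obtain c' where c'_I: "c - c' \<in> I"
    and c'_fixed: "\<And>h. h \<in> G \<Longrightarrow> vecmat_on S (K h) c - c \<in> I \<Longrightarrow> vecmat_on S (K h) c' = c'"
    by (rule fixed_modulo_invariant_subspace[of S I G K c])
      (use assms(1) I_subspace I_supp I_invariant transpose_closed in auto)
  have c_fixed: "vecmat_on S (K h) c - c \<in> I" if h: "h \<in> G" for h
  proof -
    have "lin_comb S b (vecmat_on S (K h) c - c) x = 0" if "x \<in> E" for x
      using act_coeffs[OF h, of c x] invariant_on_E[OF h that] by (simp add: lin_comb_diff)
    then show ?thesis using supp_c by (simp add: I_def vecmat_on_def)
  qed
  show ?thesis
  proof
    show "lin_comb S b c' (act h x) = lin_comb S b c' x" if "h \<in> G" for h x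
      using act_coeffs[OF that] c'_fixed[OF that c_fixed[OF that]] by simp
    show "lin_comb S b c' x = lin_comb S b c x" if "x \<in> E" for x
      using c'_I that lin_comb_diff[of S b c c' x] by (simp add: I_def)
  qed
qed

section \<open>Polynomials as combinations of monomials\<close>

lemma sum_apply: "(\<Sum>a\<in>A. f a) x = (\<Sum>a\<in>A. f a x)"
  by (induction A rule: infinite_finite_induct) auto

lemma span_times_closed:
  assumes M_times: "\<And>f g. f \<in> M \<Longrightarrow> g \<in> M \<Longrightarrow> (\<lambda>x. f x * g x) \<in> M"
    and "f \<in> real_fun.span M" "g \<in> real_fun.span M"
  shows "(\<lambda>x. f x * g x) \<in> real_fun.span M"
proof -
  have times_subspace: "real_fun.subspace {f. (\<lambda>x. f x * g x) \<in> real_fun.span M}" for g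
  proof -
    have "(\<lambda>x. 0 * g x) \<in> real_fun.span M"
      using real_fun.span_zero by (simp add: zero_fun_def)
    moreover have "(\<lambda>x. (f1 + f2) x * g x) = (\<lambda>x. f1 x * g x) + (\<lambda>x. f2 x * g x)" for f1 f2
      by (simp add: fun_eq_iff algebra_simps)
    moreover have "(\<lambda>x. a * f x * g x) = (\<lambda>x. a * (f x * g x))" for a f
      by (simp add: mult.assoc)
    ultimately show ?thesis
      unfolding real_fun.subspace_def by (auto intro: real_fun.span_add real_fun.span_scale)
  qed
  have "(\<lambda>x. m x * g x) \<in> real_fun.span M" if m: "m \<in> M" for m
  proof -
    have "M \<subseteq> {g. (\<lambda>x. g x * m x) \<in> real_fun.span M}"
      using M_times m by (auto intro: real_fun.span_base)
    then have "(\<lambda>x. g x * m x) \<in> real_fun.span M"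
      using real_fun.span_minimal[OF _ times_subspace] assms(3) by blast
    then show ?thesis by (simp add: mult.commute)
  qed
  then have "M \<subseteq> {f. (\<lambda>x. f x * g x) \<in> real_fun.span M}" by blast
  then show ?thesis
    using real_fun.span_minimal[OF _ times_subspace] assms(2) by blast
qed

text \<open>Monomials are indexed by words over the coordinates; different words may give the
  same monomial, so coefficient vectors are not unique, which the argument never needs.\<close>
definition word_monomial :: "'z list \<Rightarrow> ('z \<Rightarrow> real) \<Rightarrow> real" where
  "word_monomial w x = prod_list (map x w)"

lemma word_monomial_Nil: "word_monomial [] = (\<lambda>x. 1)"
  by (simp add: fun_eq_iff word_monomial_def)

lemma word_monomial_Cons: "word_monomial (z # w) = (\<lambda>x. x z * word_monomial w x)"
  by (simp add: fun_eq_iff word_monomial_def)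

lemma word_monomial_append: "word_monomial (u @ v) = (\<lambda>x. word_monomial u x * word_monomial v x)"
  by (simp add: fun_eq_iff word_monomial_def)

lemma poly_on_subset_span_word_monomials:
  assumes "P \<in> poly_on Z"
  shows "P \<in> real_fun.span (word_monomial ` lists Z)"
  using assms
proof (induction rule: poly_on.induct)
  case (const c)
  have "(\<lambda>x. c * word_monomial [] x) \<in> real_fun.span (word_monomial ` lists Z)"
    by (intro real_fun.span_scale real_fun.span_base) auto
  then show ?case by (simp add: word_monomial_Nil)
next
  case (coord z)
  then have "word_monomial [z] \<in> real_fun.span (word_monomial ` lists Z)"
    by (intro real_fun.span_base) auto
  then show ?case by (simp add: word_monomial_Cons word_monomial_Nil)
next
  case (add P Q)
  have "P + Q \<in> real_fun.span (word_monomial ` lists Z)"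
    by (rule real_fun.span_add[OF add.IH])
  then show ?case by (simp add: plus_fun_def)
next
  case (mult P Q)
  show ?case
    by (rule span_times_closed[OF _ mult.IH]) (auto simp flip: word_monomial_append intro!: imageI)
qed

definition words :: "'z set \<Rightarrow> nat \<Rightarrow> 'z list set" where
  "words Z d = {w. set w \<subseteq> Z \<and> length w \<le> d}"

lemma finite_words: "finite Z \<Longrightarrow> finite (words Z d)"
  unfolding words_def by (rule finite_lists_length_le)

lemma poly_on_eq_lin_comb_words:
  assumes "P \<in> poly_on Z" "finite Z"
  obtains d c where "\<And>w. w \<notin> words Z d \<Longrightarrow> c w = 0" "P = lin_comb (words Z d) word_monomial c"
proof -
  obtain T r where T: "finite T" "T \<subseteq> word_monomial ` lists Z"
    and P: "P = (\<Sum>m\<in>T. (\<lambda>x. r m * m x))"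
    using poly_on_subset_span_word_monomials[OF assms(1)] unfolding real_fun.span_explicit by blast
  obtain F where F: "F \<subseteq> lists Z" "inj_on word_monomial F" "T = word_monomial ` F"
    using T(2) subset_image_inj by metis
  have "finite F" using T(1) F(2,3) finite_image_iff by blast
  define d where "d = Max (insert 0 (length ` F))"
  have F_words: "F \<subseteq> words Z d"
    using F(1) \<open>finite F\<close> by (auto simp: words_def d_def)
  define c where "c w = (if w \<in> F then r (word_monomial w) else 0)" for w
  have "P = lin_comb F word_monomial c"
    using F(2,3) by (simp add: P fun_eq_iff sum_apply lin_comb_def sum.reindex c_def)
  also have "\<dots> = lin_comb (words Z d) word_monomial c"
    unfolding lin_comb_def fun_eq_iff
    by (intro allI sum.mono_neutral_cong_left finite_words assms(2) F_words) (auto simp: c_def)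
  moreover have "c w = 0" if "w \<notin> words Z d" for w
    using F_words that by (auto simp: c_def)
  ultimately show ?thesis using that by blast
qed

lemma word_monomial_in_poly_on: "set w \<subseteq> Z \<Longrightarrow> word_monomial w \<in> poly_on Z"
proof (induction w)
  case Nil
  show ?case unfolding word_monomial_Nil by (rule poly_on.const)
next
  case (Cons z w)
  then show ?case unfolding word_monomial_Cons by (auto intro: poly_on.mult poly_on.coord)
qed

lemma lin_comb_word_monomials_in_poly_on:
  assumes "finite S" "S \<subseteq> lists Z"
  shows "lin_comb S word_monomial c \<in> poly_on Z"
  using assms
proof (induction S rule: finite_induct)
  case empty
  show ?case unfolding lin_comb_def by (simp add: poly_on.const)
next
  case (insert w S)
  have "(\<lambda>x. c w * word_monomial w x + lin_comb S word_monomial c x) \<in> poly_on Z"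
    using insert.prems
    by (intro poly_on.add poly_on.mult poly_on.const word_monomial_in_poly_on insert.IH) auto
  then show ?case using insert.hyps by (simp add: lin_comb_def)
qed

fun tensor_entry :: "('z \<Rightarrow> 'z \<Rightarrow> real) \<Rightarrow> 'z list \<Rightarrow> 'z list \<Rightarrow> real" where
  "tensor_entry M [] [] = 1"
| "tensor_entry M (z # w) (z' # w') = M z z' * tensor_entry M w w'"
| "tensor_entry M _ _ = 0"

lemma tensor_entry_length_neq: "length w \<noteq> length w' \<Longrightarrow> tensor_entry M w w' = 0"
  by (induction M w w' rule: tensor_entry.induct) auto

lemma tensor_entry_transpose:
  assumes "\<And>z z'. M' z z' = M z' z"
  shows "tensor_entry M' w w' = tensor_entry M w' w"
  using assms by (induction M' w w' rule: tensor_entry.induct) (auto elim: tensor_entry.elims)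

lemma word_monomial_linear_subst:
  assumes y: "\<And>z. z \<in> Z \<Longrightarrow> y z = (\<Sum>z'\<in>Z. M z z' * x z')"
  shows "set w \<subseteq> Z \<Longrightarrow> word_monomial w y =
    (\<Sum>w'\<in>{w'. set w' \<subseteq> Z \<and> length w' = length w}. tensor_entry M w w' * word_monomial w' x)"
proof (induction w)
  case Nil
  have "{w'. set w' \<subseteq> Z \<and> length w' = 0} = {[]}" by auto
  then show ?case by (simp add: word_monomial_Nil)
next
  case (Cons z w)
  let ?L = "{w'. set w' \<subseteq> Z \<and> length w' = length w}"
  let ?g = "\<lambda>w'. tensor_entry M (z # w) w' * word_monomial w' x"
  have "word_monomial (z # w) y = y z * word_monomial w y"
    by (simp add: word_monomial_Cons)
  also have "\<dots> = (\<Sum>z'\<in>Z. M z z' * x z') * (\<Sum>w'\<in>?L. tensor_entry M w w' * word_monomial w' x)"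
    using Cons y by simp
  also have "\<dots> = (\<Sum>w'\<in>?L. \<Sum>z'\<in>Z. ?g (z' # w'))"
    by (subst sum_product, subst sum.swap) (simp add: word_monomial_Cons mult_ac)
  also have "\<dots> = (\<Sum>(w', z')\<in>?L \<times> Z. ?g (z' # w'))"
    by (rule sum.cartesian_product)
  also have "\<dots> = (\<Sum>w'\<in>(\<lambda>(w', z'). z' # w') ` (?L \<times> Z). ?g w')"
    by (subst sum.reindex) (auto simp: inj_on_def case_prod_beta)
  also have "(\<lambda>(w', z'). z' # w') ` (?L \<times> Z) = {w'. set w' \<subseteq> Z \<and> length w' = length (z # w)}"
    by (simp add: lists_length_Suc_eq)
  finally show ?case .
qed

lemma word_monomial_linear_subst_words:
  assumes "finite Z" "\<And>z. z \<in> Z \<Longrightarrow> y z = (\<Sum>z'\<in>Z. M z z' * x z')" "w \<in> words Z d"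
  shows "word_monomial w y = (\<Sum>w'\<in>words Z d. tensor_entry M w w' * word_monomial w' x)"
proof -
  have "word_monomial w y =
      (\<Sum>w'\<in>{w'. set w' \<subseteq> Z \<and> length w' = length w}. tensor_entry M w w' * word_monomial w' x)"
    using word_monomial_linear_subst[OF assms(2)] assms(3) by (simp add: words_def)
  also have "\<dots> = (\<Sum>w'\<in>words Z d. tensor_entry M w w' * word_monomial w' x)"
  proof (rule sum.mono_neutral_left)
    show "finite (words Z d)" using assms(1) by (rule finite_words)
    show "{w'. set w' \<subseteq> Z \<and> length w' = length w} \<subseteq> words Z d"
      using assms(3) by (auto simp: words_def)
    show "\<forall>w'\<in>words Z d - {w'. set w' \<subseteq> Z \<and> length w' = length w}.
        tensor_entry M w w' * word_monomial w' x = 0"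
      by (auto simp: words_def) (metis tensor_entry_length_neq)
  qed
  finally show ?thesis .
qed

section \<open>The action of \<open>O(p,q) \<times> O(p',q')\<close> on tensors\<close>

lemma eta_mult_self: "eta p i * eta p i = 1"
  by (simp add: eta_def)

text \<open>The defining identity says that \<open>Oinv p A\<close> is a left inverse of \<open>A\<close>; over a field it is
  then also a right inverse, which is the defining identity for the transpose.\<close>
lemma Ogrp_transpose:
  assumes A: "A \<in> Ogrp p q"
  shows "(\<lambda>i j. A j i) \<in> Ogrp p q"
proof -
  let ?n = "p + q"
  define Am where "Am = mat ?n ?n (\<lambda>(i, j). A i j)"
  define Bm where "Bm = mat ?n ?n (\<lambda>(i, j). Oinv p A i j)"
  have Am: "Am \<in> carrier_mat ?n ?n" and Bm: "Bm \<in> carrier_mat ?n ?n"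
    unfolding Am_def Bm_def by auto
  have "Bm * Am = 1\<^sub>m ?n"
  proof (rule eq_matI)
    fix i j assume "i < dim_row (1\<^sub>m ?n :: real mat)" "j < dim_col (1\<^sub>m ?n :: real mat)"
    then have ij: "i < ?n" "j < ?n" by auto
    have "(Bm * Am) $$ (i, j) = eta p i * (\<Sum>l<?n. A l i * eta p l * A l j)"
      using ij unfolding Am_def Bm_def Oinv_def
      by (simp add: scalar_prod_def atLeast0LessThan sum_distrib_left mult_ac)
    also have "\<dots> = (if i = j then 1 else 0)"
      using A ij unfolding Ogrp_def by (simp add: eta_mult_self)
    finally show "(Bm * Am) $$ (i, j) = 1\<^sub>m ?n $$ (i, j)" using ij by simp
  qed (use Am Bm in auto)
  then have AB: "Am * Bm = 1\<^sub>m ?n" using mat_mult_left_right_inverse[OF Bm Am] by simp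
  show ?thesis unfolding Ogrp_def
  proof (intro CollectI allI impI)
    fix i j assume ij: "i < ?n" "j < ?n"
    have "(\<Sum>l<?n. A i l * eta p l * A j l) * eta p j = (Am * Bm) $$ (i, j)"
      using ij unfolding Am_def Bm_def Oinv_def
      by (simp add: scalar_prod_def atLeast0LessThan sum_distrib_left mult_ac)
    also have "\<dots> = (if i = j then 1 else 0)" using AB ij by simp
    finally have "(\<Sum>l<?n. A i l * eta p l * A j l) * eta p j * eta p j = (if i = j then eta p i else 0)"
      by auto
    then show "(\<Sum>l<?n. A i l * eta p l * A j l) = (if i = j then eta p i else 0)"
      by (simp add: mult.assoc eta_mult_self)
  qed
qed

lemma Hgrp_transpose:
  "h \<in> Hgrp p q p' q' \<Longrightarrow> (\<lambda>i j. fst h j i, \<lambda>i j. snd h j i) \<in> Hgrp p q p' q'"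
  using Ogrp_transpose unfolding Hgrp_def by (auto simp: mem_Times_iff)

definition act_matrix :: "nat \<Rightarrow> nat \<Rightarrow> (nat \<Rightarrow> nat) \<Rightarrow> (nat \<Rightarrow> nat)
    \<Rightarrow> (nat \<Rightarrow> nat \<Rightarrow> real) \<times> (nat \<Rightarrow> nat \<Rightarrow> real)
    \<Rightarrow> nat \<times> nat list \<times> nat list \<Rightarrow> nat \<times> nat list \<times> nat list \<Rightarrow> real" where
  "act_matrix p p' r s h = (\<lambda>(i, I, J) (i', I', J').
     if i' = i then (\<Prod>a<r i. Oinv p (fst h) (I' ! a) (I ! a)) * (\<Prod>b<s i. Oinv p' (snd h) (J' ! b) (J ! b))
     else 0)"

lemma act_matrix_transpose:
  "act_matrix p p' r s (\<lambda>i j. fst h j i, \<lambda>i j. snd h j i) z z' = act_matrix p p' r s h z' z"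
  unfolding act_matrix_def Oinv_def by (auto split: prod.splits simp: mult_ac)

lemma finite_tuples: "finite (tuples d r)"
proof -
  have "tuples d r = {xs. set xs \<subseteq> {..<d} \<and> length xs = r}" unfolding tuples_def by auto
  then show ?thesis using finite_lists_length_eq[of "{..<d}" r] by simp
qed

lemma finite_Idx: "finite (Idx p q p' q' L r s)"
proof -
  have "Idx p q p' q' L r s = Sigma {..<L} (\<lambda>i. tuples (p+q) (r i) \<times> tuples (p'+q') (s i))"
    unfolding Idx_def by auto
  then show ?thesis by (simp add: finite_tuples)
qed

lemma act_eq_sum_act_matrix:
  assumes z: "z \<in> Idx p q p' q' L r s"
  shows "act p q p' q' L r s h x z = (\<Sum>z'\<in>Idx p q p' q' L r s. act_matrix p p' r s h z z' * x z')"
proof -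
  obtain i I J where zi: "z = (i, I, J)" by (cases z) auto
  let ?T = "tuples (p+q) (r i) \<times> tuples (p'+q') (s i)"
  let ?f = "\<lambda>z'. act_matrix p p' r s h z z' * x z'"
  have "(\<Sum>z'\<in>Idx p q p' q' L r s. ?f z') = (\<Sum>z'\<in>Pair i ` ?T. ?f z')"
    using z zi by (intro sum.mono_neutral_right finite_Idx) (auto simp: Idx_def act_matrix_def)
  also have "\<dots> = (\<Sum>(I', J')\<in>?T. ?f (i, I', J'))"
    by (subst sum.reindex) (auto simp: inj_on_def case_prod_beta)
  also have "\<dots> = act p q p' q' L r s h x z"
    using z unfolding act_def zi sum.cartesian_product[symmetric]
    by (auto simp: act_matrix_def mult_ac intro!: sum.cong)
  finally show ?thesis by simp
qed

lemma word_monomial_act: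
  assumes "w \<in> words (Idx p q p' q' L r s) d"
  shows "word_monomial w (act p q p' q' L r s h x) =
    (\<Sum>w'\<in>words (Idx p q p' q' L r s) d. tensor_entry (act_matrix p p' r s h) w w' * word_monomial w' x)"
  by (rule word_monomial_linear_subst_words[OF finite_Idx act_eq_sum_act_matrix assms])

lemma act_matrix_tensor_transpose_closed:
  assumes "h \<in> Hgrp p q p' q'"
  shows "\<exists>h'\<in>Hgrp p q p' q'. \<forall>w\<in>W. \<forall>w'\<in>W.
    tensor_entry (act_matrix p p' r s h') w w' = tensor_entry (act_matrix p p' r s h) w' w"
  using Hgrp_transpose[OF assms]
    tensor_entry_transpose[where M = "act_matrix p p' r s h", OF act_matrix_transpose] by blast

theorem lemma4p1:
  fixes p q p' q' L :: nat and r s :: "nat \<Rightarrow> nat"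
    and E :: "(nat \<times> nat list \<times> nat list \<Rightarrow> real) set"
    and P :: "(nat \<times> nat list \<times> nat list \<Rightarrow> real) \<Rightarrow> real"
  assumes "E \<subseteq> Tsp p q p' q' L r s"
    and "E \<noteq> {}"
    and "\<forall>h\<in>Hgrp p q p' q'. \<forall>x\<in>E. act p q p' q' L r s h x \<in> E"
    and "P \<in> poly_on (Idx p q p' q' L r s)"
    and "\<forall>h\<in>Hgrp p q p' q'. \<forall>x\<in>E. P (act p q p' q' L r s h x) = P x"
  shows "\<exists>P'. P' \<in> poly_on (Idx p q p' q' L r s)
          \<and> (\<forall>h\<in>Hgrp p q p' q'. \<forall>x\<in>Tsp p q p' q' L r s. P' (act p q p' q' L r s h x) = P' x)
          \<and> (\<forall>x\<in>E. P' x = P x)"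
proof -
  let ?Z = "Idx p q p' q' L r s"
  obtain d c where supp_c: "\<And>w. w \<notin> words ?Z d \<Longrightarrow> c w = 0"
    and P: "P = lin_comb (words ?Z d) word_monomial c"
    using poly_on_eq_lin_comb_words[OF assms(4) finite_Idx] by blast
  have P_invariant_on_E: "lin_comb (words ?Z d) word_monomial c (act p q p' q' L r s h x) =
      lin_comb (words ?Z d) word_monomial c x" if "h \<in> Hgrp p q p' q'" "x \<in> E" for h x
    using assms(5) that unfolding P by blast
  obtain c' where
    invariant: "\<And>h x. h \<in> Hgrp p q p' q' \<Longrightarrow>
      lin_comb (words ?Z d) word_monomial c' (act p q p' q' L r s h x) =
      lin_comb (words ?Z d) word_monomial c' x"
    and on_E: "\<And>x. x \<in> E \<Longrightarrow> lin_comb (words ?Z d) word_monomial c' x = P x"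
    using invariant_extension[where S = "words ?Z d" and G = "Hgrp p q p' q'" and b = word_monomial
          and act = "act p q p' q' L r s" and K = "\<lambda>h. tensor_entry (act_matrix p p' r s h)"
          and E = E and c = c,
        OF finite_words[OF finite_Idx] word_monomial_act act_matrix_tensor_transpose_closed _ supp_c
          P_invariant_on_E]
      assms(3) unfolding P by blast
  have "lin_comb (words ?Z d) word_monomial c' \<in> poly_on ?Z"
    by (rule lin_comb_word_monomials_in_poly_on[OF finite_words[OF finite_Idx]]) (auto simp: words_def)
  with invariant on_E show ?thesis by blast
qed

end
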